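(* Let $G$ be a finite connected graph, viewed as an electrical network with unit resistance on each edge, and let $x,y$ be vertices of $G$. Then for every $\varepsilon>0$, $$\mathbb{P}_x\big(\tau_y\leq \varepsilon\, (R_{\mathrm{eff}}(x\leftrightarrow y))^2\big)\leq \varepsilon,$$ where $(X_t)$ is simple random walk on $G$ started at $x$.
   Context: $\tau_y=\min\{t\geq 1:X_t=y\}$. $R_{\mathrm{eff}}(x\leftrightarrow y)$ is the effective resistance between $x$ and $y$ in the network with unit edge resistances. *)

theory Defs
  imports "HOL-Probability.Probability"
begin

definition finite_connected_graph :: "'a set \<Rightarrow> ('a \<Rightarrow> 'a \<Rightarrow> bool) \<Rightarrow> bool" where
  "finite_connected_graph V E \<longleftrightarrow>
     finite V \<and> V \<noteq> {} \<and>
     (\<forall>u v. E u v \<longrightarrow> u \<in> V \<and> v \<in> V) \<and>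
     (\<forall>u v. E u v \<longrightarrow> E v u) \<and>
     (\<forall>u. \<not> E u u) \<and>
     (\<forall>u\<in>V. \<forall>v\<in>V. (u, v) \<in> {(a, b). E a b}\<^sup>*)"

text \<open>One step of simple random walk: uniform over the neighbours
  (an isolated vertex stays put; this only happens in the one-vertex graph).\<close>
definition srw_step :: "('a \<Rightarrow> 'a \<Rightarrow> bool) \<Rightarrow> 'a \<Rightarrow> 'a pmf" where
  "srw_step E v = (if {w. E v w} = {} then return_pmf v else pmf_of_set {w. E v w})"

fun srw_traj :: "('a \<Rightarrow> 'a \<Rightarrow> bool) \<Rightarrow> nat \<Rightarrow> 'a \<Rightarrow> 'a list pmf" where
  "srw_traj E 0 v = return_pmf [v]"
| "srw_traj E (Suc n) v = bind_pmf (srw_step E v) (\<lambda>w. map_pmf (\<lambda>xs. v # xs) (srw_traj E n w))"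

text \<open>P_x(tau_y \<le> T) where tau_y = min{t \<ge> 1 : X_t = y}.\<close>
definition srw_hit_prob :: "('a \<Rightarrow> 'a \<Rightarrow> bool) \<Rightarrow> 'a \<Rightarrow> 'a \<Rightarrow> real \<Rightarrow> real" where
  "srw_hit_prob E x y T =
     measure_pmf.prob (srw_traj E (nat \<lfloor>T\<rfloor>) x)
       {xs. \<exists>t. 1 \<le> t \<and> real t \<le> T \<and> xs ! t = y}"

text \<open>Dirichlet energy of f with unit edge resistances (each edge counted once).\<close>
definition energy :: "'a set \<Rightarrow> ('a \<Rightarrow> 'a \<Rightarrow> bool) \<Rightarrow> ('a \<Rightarrow> real) \<Rightarrow> real" where
  "energy V E f = (1/2) * (\<Sum>u\<in>V. \<Sum>v\<in>{w\<in>V. E u w}. (f u - f v)\<^sup>2)"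

text \<open>Effective conductance via the Dirichlet principle, and effective resistance
  as its reciprocal (R_eff(x,x) = 0).\<close>
definition eff_conductance :: "'a set \<Rightarrow> ('a \<Rightarrow> 'a \<Rightarrow> bool) \<Rightarrow> 'a \<Rightarrow> 'a \<Rightarrow> real" where
  "eff_conductance V E x y = Inf {energy V E f | f. f x = 1 \<and> f y = 0}"

definition eff_resistance :: "'a set \<Rightarrow> ('a \<Rightarrow> 'a \<Rightarrow> bool) \<Rightarrow> 'a \<Rightarrow> 'a \<Rightarrow> real" where
  "eff_resistance V E x y = (if x = y then 0 else 1 / eff_conductance V E x y)"

end

theory Submission
  imports Defs
begin

text \<open>Let \<open>f\<close> be the voltage minimising the energy with \<open>f x = 1\<close>, \<open>f y = 0\<close>; it is harmonic
  off \<open>{x, y}\<close>, its energy is the effective conductance \<open>C\<close>, and the current \<open>C\<close> leaving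
  \<open>x\<close> bounds the current through every edge. Hence \<open>g = (1 - f) / C\<close> vanishes at \<open>x\<close>, equals
  \<open>R\<^sub>e\<^sub>f\<^sub>f\<close> at \<open>y\<close>, is harmonic off \<open>{x, y}\<close> and changes by at most 1 along edges, so
  \<open>g(X\<^sub>t)\<^sup>2 - t\<close> is a supermartingale before \<open>\<tau>\<^sub>y\<close>. Optional stopping at \<open>min \<tau>\<^sub>y n\<close> gives
  \<open>R\<^sub>e\<^sub>f\<^sub>f\<^sup>2 \<P>(\<tau>\<^sub>y \<le> n) \<le> n\<close>.\<close>

definition laplacian :: "'a set \<Rightarrow> ('a \<Rightarrow> 'a \<Rightarrow> bool) \<Rightarrow> ('a \<Rightarrow> real) \<Rightarrow> 'a \<Rightarrow> real" where
  "laplacian A E f u = (\<Sum>w\<in>{w\<in>A. E u w}. f u - f w)"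

definition dirichlet_form ::
    "'a set \<Rightarrow> ('a \<Rightarrow> 'a \<Rightarrow> bool) \<Rightarrow> ('a \<Rightarrow> real) \<Rightarrow> ('a \<Rightarrow> real) \<Rightarrow> real" where
  "dirichlet_form V E f g = (1/2) * (\<Sum>u\<in>V. \<Sum>v\<in>{w\<in>V. E u w}. (f u - f v) * (g u - g v))"

lemma sum_neighbours_swap:
  assumes "finite A" "\<And>u v. E u v \<Longrightarrow> E v u"
  shows "(\<Sum>u\<in>A. \<Sum>w\<in>{w\<in>A. E u w}. h u w) = (\<Sum>w\<in>A. \<Sum>u\<in>{u\<in>A. E w u}. h u w)"
proof -
  have "(\<Sum>u\<in>A. \<Sum>w\<in>{w\<in>A. E u w}. h u w) = (\<Sum>w\<in>A. \<Sum>u\<in>{u\<in>A. E u w}. h u w)"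
    by (rule sum.swap_restrict) (use assms in auto)
  also have "\<dots> = (\<Sum>w\<in>A. \<Sum>u\<in>{u\<in>A. E w u}. h u w)"
  proof -
    have "{u\<in>A. E u w} = {u\<in>A. E w u}" for w using assms(2) by blast
    then show ?thesis by simp
  qed
  finally show ?thesis .
qed

lemma sum_laplacian_eq_0:
  assumes "finite A" "\<And>u v. E u v \<Longrightarrow> E v u"
  shows "(\<Sum>u\<in>A. laplacian A E f u) = 0"
proof -
  have "(\<Sum>u\<in>A. \<Sum>w\<in>{w\<in>A. E u w}. f u - f w) = (\<Sum>w\<in>A. \<Sum>u\<in>{u\<in>A. E w u}. f u - f w)"
    by (rule sum_neighbours_swap[OF assms])
  also have "\<dots> = - (\<Sum>w\<in>A. \<Sum>u\<in>{u\<in>A. E w u}. f w - f u)"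
    by (simp add: sum_negf[symmetric])
  finally show ?thesis unfolding laplacian_def by simp
qed

lemma dirichlet_form_eq_sum_laplacian:
  assumes "finite V" "\<And>u v. E u v \<Longrightarrow> E v u"
  shows "dirichlet_form V E f g = (\<Sum>u\<in>V. g u * laplacian V E f u)"
proof -
  let ?S = "\<lambda>h. \<Sum>u\<in>V. \<Sum>v\<in>{w\<in>V. E u w}. h u v"
  have "?S (\<lambda>u v. (f u - f v) * (g u - g v)) = ?S (\<lambda>u v. (f u - f v) * g u) - ?S (\<lambda>u v. (f u - f v) * g v)"
    by (simp add: right_diff_distrib sum_subtractf)
  also have "?S (\<lambda>u v. (f u - f v) * g u) = (\<Sum>u\<in>V. g u * laplacian V E f u)"
    by (simp add: laplacian_def sum_distrib_left mult.commute)
  also have "?S (\<lambda>u v. (f u - f v) * g v) = (\<Sum>v\<in>V. \<Sum>u\<in>{u\<in>V. E v u}. (f u - f v) * g v)"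
    by (rule sum_neighbours_swap[OF assms])
  also have "\<dots> = - (\<Sum>v\<in>V. g v * laplacian V E f v)"
    by (simp add: laplacian_def sum_distrib_left sum_negf[symmetric] algebra_simps)
  finally show ?thesis unfolding dirichlet_form_def by simp
qed

lemma energy_eq_dirichlet_form: "energy V E f = dirichlet_form V E f f"
  unfolding energy_def dirichlet_form_def by (simp add: power2_eq_square)

lemma energy_nonneg: "0 \<le> energy V E f"
  unfolding energy_def by (simp add: sum_nonneg)

lemma energy_add_scaled:
  "energy V E (\<lambda>u. f u + t * g u) = energy V E f + 2 * t * dirichlet_form V E f g + t\<^sup>2 * energy V E g"
proof -
  have "(f u + t * g u - (f v + t * g v))\<^sup>2
      = (f u - f v)\<^sup>2 + (2 * t) * ((f u - f v) * (g u - g v)) + t\<^sup>2 * (g u - g v)\<^sup>2" for u v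
    by (simp add: power2_eq_square algebra_simps)
  then show ?thesis
    unfolding energy_def dirichlet_form_def
    by (simp only: sum.distrib sum_distrib_left[symmetric]) (simp add: algebra_simps)
qed

lemma energy_clamp_le: "energy V E (\<lambda>v. max 0 (min 1 (f v))) \<le> energy V E f"
proof -
  have "(max 0 (min 1 a) - max 0 (min 1 b))\<^sup>2 \<le> (a - b)\<^sup>2" for a b :: real
  proof -
    have "\<bar>max 0 (min 1 a) - max 0 (min 1 b)\<bar> \<le> \<bar>a - b\<bar>"
      by (simp add: max_def min_def abs_if)
    then show ?thesis by (simp add: abs_le_square_iff)
  qed
  then show ?thesis unfolding energy_def by (intro mult_left_mono sum_mono) auto
qed

lemma continuous_on_eval [continuous_intros]: "continuous_on S (\<lambda>f :: 'a \<Rightarrow> real. f v)"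
  by (rule continuous_on_subset[OF continuous_on_product_coordinates]) auto

text \<open>Clamping to \<open>[0, 1]\<close> lowers the energy, so it suffices to minimise over the compact
  set of \<open>[0, 1]\<close>-valued functions in the product topology.\<close>
lemma energy_minimizer_exists:
  assumes "x \<noteq> y"
  obtains f :: "'a \<Rightarrow> real" where "f x = 1" "f y = 0" "\<And>v. 0 \<le> f v \<and> f v \<le> 1"
    "\<And>g. g x = 1 \<Longrightarrow> g y = 0 \<Longrightarrow> energy V E f \<le> energy V E g"
proof -
  define K where "K = (\<lambda>v. if v = x then {1::real} else if v = y then {0} else {0..1})"
  define S where "S = PiE UNIV K"
  have "compactin (product_topology (\<lambda>_. euclidean) UNIV) S"
    unfolding S_def by (subst compactin_PiE) (auto simp: K_def)
  then have "compact S" by (simp add: euclidean_product_topology)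
  moreover have "continuous_on S (energy V E)"
    unfolding energy_def by (intro continuous_intros)
  moreover have "(\<lambda>v. if v = x then 1 else 0) \<in> S"
    unfolding S_def K_def using assms by auto
  ultimately obtain f where fS: "f \<in> S" and f_min: "\<And>g. g \<in> S \<Longrightarrow> energy V E f \<le> energy V E g"
    by (metis continuous_attains_inf empty_iff)
  have fK: "f v \<in> K v" for v using fS by (simp add: S_def PiE_iff)
  show ?thesis
  proof
    show "f x = 1" using fK[of x] by (simp add: K_def)
    show "f y = 0" using fK[of y] assms by (simp add: K_def)
    show "0 \<le> f v \<and> f v \<le> 1" for v using fK[of v] by (simp add: K_def split: if_splits)
  next
    fix g :: "'a \<Rightarrow> real"
    assume "g x = 1" "g y = 0"
    then have "max 0 (min 1 (g v)) \<in> K v" for v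
      using assms by (simp add: K_def)
    then have "(\<lambda>v. max 0 (min 1 (g v))) \<in> S"
      by (simp add: S_def PiE_iff)
    then have "energy V E f \<le> energy V E (\<lambda>v. max 0 (min 1 (g v)))" by (rule f_min)
    also have "\<dots> \<le> energy V E g" by (rule energy_clamp_le)
    finally show "energy V E f \<le> energy V E g" .
  qed
qed

lemma linear_coeff_eq_0_if_quadratic_nonneg:
  fixes a b :: real
  assumes "\<And>t. 0 \<le> b * t + a * t\<^sup>2"
  shows "b = 0"
proof -
  define s where "s = 1 / (\<bar>a\<bar> + 1)"
  have "0 < s" by (simp add: s_def add_pos_nonneg)
  moreover have "a * s < 1" by (simp add: s_def divide_less_eq add_pos_nonneg abs_if)
  ultimately have "s * (a * s - 1) < 0" by (simp add: mult_pos_neg)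
  moreover have "0 \<le> b\<^sup>2 * (s * (a * s - 1))"
    using assms[of "- b * s"] by (simp add: power2_eq_square algebra_simps)
  ultimately show ?thesis by (metis mult_pos_neg not_le zero_less_power2)
qed

lemma sum_square_le_if_bounded_increments:
  fixes g :: "'a \<Rightarrow> real"
  assumes "finite N" "g v * (\<Sum>w\<in>N. g w - g v) = 0" "\<And>w. w \<in> N \<Longrightarrow> \<bar>g w - g v\<bar> \<le> 1"
  shows "(\<Sum>w\<in>N. (g w)\<^sup>2) \<le> card N * ((g v)\<^sup>2 + 1)"
proof -
  have "(\<Sum>w\<in>N. (g w)\<^sup>2) = (\<Sum>w\<in>N. (g w - g v)\<^sup>2 + 2 * g v * (g w - g v) + (g v)\<^sup>2)"
    by (simp add: power2_eq_square algebra_simps)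
  also have "\<dots> = (\<Sum>w\<in>N. (g w - g v)\<^sup>2) + 2 * (g v * (\<Sum>w\<in>N. g w - g v)) + card N * (g v)\<^sup>2"
    by (simp add: sum.distrib sum_distrib_left mult.assoc)
  also have "(\<Sum>w\<in>N. (g w - g v)\<^sup>2) \<le> (\<Sum>w\<in>N. 1)"
    using assms(3) abs_le_square_iff[of "g _ - g v" 1] by (intro sum_mono) simp
  finally show ?thesis using assms(2) by (simp add: algebra_simps)
qed

locale energy_minimizer =
  fixes V :: "'a set" and E :: "'a \<Rightarrow> 'a \<Rightarrow> bool" and x y :: 'a and f :: "'a \<Rightarrow> real"
  assumes finite_V: "finite V" and sym: "\<And>u v. E u v \<Longrightarrow> E v u"
    and edge_in_V: "\<And>u v. E u v \<Longrightarrow> u \<in> V \<and> v \<in> V"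
    and x_in_V: "x \<in> V" and x_ne_y: "x \<noteq> y"
    and f_x: "f x = 1" and f_y: "f y = 0" and f_range: "\<And>v. 0 \<le> f v \<and> f v \<le> 1"
    and f_min: "\<And>g. g x = 1 \<Longrightarrow> g y = 0 \<Longrightarrow> energy V E f \<le> energy V E g"
begin

lemma laplacian_eq_0:
  assumes "v \<in> V" "v \<noteq> x" "v \<noteq> y"
  shows "laplacian V E f v = 0"
proof -
  define d where "d = (\<lambda>u. if u = v then 1 else (0::real))"
  have "dirichlet_form V E f d = (\<Sum>u\<in>V. d u * laplacian V E f u)"
    by (rule dirichlet_form_eq_sum_laplacian[OF finite_V sym])
  also have "\<dots> = (\<Sum>u\<in>V. if u = v then laplacian V E f v else 0)"
    by (intro sum.cong) (auto simp: d_def)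
  also have "\<dots> = laplacian V E f v"
    using assms(1) finite_V by simp
  finally have form_d: "dirichlet_form V E f d = laplacian V E f v" .
  have "0 \<le> (2 * laplacian V E f v) * t + energy V E d * t\<^sup>2" for t
  proof -
    have "energy V E f \<le> energy V E (\<lambda>u. f u + t * d u)"
      by (rule f_min) (use assms f_x f_y in \<open>auto simp: d_def\<close>)
    then show ?thesis unfolding energy_add_scaled form_d by (simp add: algebra_simps)
  qed
  then have "2 * laplacian V E f v = 0" by (rule linear_coeff_eq_0_if_quadratic_nonneg)
  then show ?thesis by simp
qed

lemma energy_eq_laplacian_x: "energy V E f = laplacian V E f x"
proof -
  have "energy V E f = (\<Sum>u\<in>V. f u * laplacian V E f u)"
    by (simp add: energy_eq_dirichlet_form dirichlet_form_eq_sum_laplacian[OF finite_V sym])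
  also have "\<dots> = (\<Sum>u\<in>V. if u = x then laplacian V E f x else 0)"
    using laplacian_eq_0 f_x f_y by (intro sum.cong) auto
  also have "\<dots> = laplacian V E f x" using x_in_V finite_V by simp
  finally show ?thesis .
qed

lemma eff_conductance_eq_laplacian_x: "eff_conductance V E x y = laplacian V E f x"
proof -
  have "eff_conductance V E x y = energy V E f"
    unfolding eff_conductance_def by (rule cInf_eq_minimum) (use f_x f_y f_min in auto)
  then show ?thesis by (simp add: energy_eq_laplacian_x)
qed

lemma laplacian_x_nonneg: "0 \<le> laplacian V E f x"
  using energy_eq_laplacian_x energy_nonneg by metis

text \<open>The level set \<open>S = {f > f b}\<close> contains \<open>x\<close> but not \<open>y\<close>; summing the Laplacian over \<open>S\<close>,
  the flow inside \<open>S\<close> cancels and the current out of \<open>x\<close> equals the (nonnegative) flow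
  across the boundary of \<open>S\<close>, which includes the edge from \<open>a\<close> to \<open>b\<close>.\<close>
lemma edge_diff_le_laplacian_x:
  assumes "E a b"
  shows "f a - f b \<le> laplacian V E f x"
proof (cases "f a \<le> f b")
  case True
  then show ?thesis using laplacian_x_nonneg by linarith
next
  case False
  define S where "S = {u\<in>V. f u > f b}"
  define out where "out = (\<lambda>u. \<Sum>w\<in>{w\<in>V-S. E u w}. f u - f w)"
  have finite_S: "finite S" using finite_V by (simp add: S_def)
  have a_S: "a \<in> S" using edge_in_V[OF assms] False by (simp add: S_def)
  have x_S: "x \<in> S" using x_in_V f_x False f_range[of a] by (simp add: S_def)
  have y_S: "y \<notin> S" using f_y f_range[of b] by (simp add: S_def)
  have laplacian_split: "laplacian V E f u = laplacian S E f u + out u" if "u \<in> S" for u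
  proof -
    have "{w\<in>V. E u w} = {w\<in>S. E u w} \<union> {w\<in>V-S. E u w}" by (auto simp: S_def)
    then show ?thesis
      unfolding laplacian_def out_def using finite_V finite_S
      by (simp add: sum.union_disjoint Int_def)
  qed
  have "laplacian V E f x = (\<Sum>u\<in>S. if u = x then laplacian V E f x else 0)"
    using x_S finite_S by simp
  also have "\<dots> = (\<Sum>u\<in>S. laplacian V E f u)"
    using laplacian_eq_0 y_S by (intro sum.cong) (auto simp: S_def)
  also have "\<dots> = (\<Sum>u\<in>S. laplacian S E f u) + (\<Sum>u\<in>S. out u)"
    using laplacian_split by (simp add: sum.distrib)
  also have "(\<Sum>u\<in>S. laplacian S E f u) = 0" by (rule sum_laplacian_eq_0[OF finite_S sym])
  finally have flow_out: "laplacian V E f x = (\<Sum>u\<in>S. out u)" by simp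
  have "f a - f b \<le> out a"
    unfolding out_def using finite_V edge_in_V[OF assms] assms a_S
    by (intro member_le_sum[where f = "\<lambda>w. f a - f w"]) (auto simp: S_def)
  also have "\<dots> \<le> (\<Sum>u\<in>S. out u)"
    using a_S finite_S by (intro member_le_sum) (auto simp: out_def S_def intro: sum_nonneg)
  finally show ?thesis using flow_out by simp
qed

lemma normalized_potential_drift:
  fixes g :: "'a \<Rightarrow> real"
  assumes "v \<in> V" "v \<noteq> y" "0 < laplacian V E f x"
  defines "g \<equiv> \<lambda>u. (1 - f u) / laplacian V E f x"
  shows "(\<Sum>w\<in>{w\<in>V. E v w}. (g w)\<^sup>2) \<le> card {w\<in>V. E v w} * ((g v)\<^sup>2 + 1)"
proof (rule sum_square_le_if_bounded_increments)
  let ?C = "laplacian V E f x"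
  have increment: "g w - g v = (f v - f w) / ?C" for w
    by (simp add: g_def diff_divide_distrib)
  show "finite {w\<in>V. E v w}" using finite_V by simp
  show "g v * (\<Sum>w\<in>{w\<in>V. E v w}. g w - g v) = 0"
  proof (cases "v = x")
    case False
    have "(\<Sum>w\<in>{w\<in>V. E v w}. g w - g v) = laplacian V E f v / ?C"
      unfolding increment laplacian_def by (rule sum_divide_distrib[symmetric])
    then show ?thesis using laplacian_eq_0[OF assms(1) False assms(2)] by simp
  qed (simp add: g_def f_x)
  show "\<bar>g w - g v\<bar> \<le> 1" if "w \<in> {w\<in>V. E v w}" for w
  proof -
    have "E v w" using that by simp
    then have "f v - f w \<le> ?C" "f w - f v \<le> ?C"
      by (rule edge_diff_le_laplacian_x, rule edge_diff_le_laplacian_x[OF sym])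
    then have "\<bar>f v - f w\<bar> \<le> ?C" by linarith
    then show ?thesis
      unfolding increment using assms(3) by (simp add: abs_divide)
  qed
qed

end

definition hit_event :: "nat \<Rightarrow> 'a \<Rightarrow> 'a list set" where
  "hit_event n y = {xs. \<exists>t. 1 \<le> t \<and> t \<le> n \<and> xs ! t = y}"

lemma srw_hit_prob_eq_hit_event:
  assumes "0 \<le> T"
  shows "srw_hit_prob E x y T = measure_pmf.prob (srw_traj E (nat \<lfloor>T\<rfloor>) x) (hit_event (nat \<lfloor>T\<rfloor>) y)"
proof -
  have "real t \<le> T \<longleftrightarrow> t \<le> nat \<lfloor>T\<rfloor>" for t
  proof
    assume "real t \<le> T"
    then show "t \<le> nat \<lfloor>T\<rfloor>" by (simp add: le_floor_iff le_nat_iff)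
  next
    assume "t \<le> nat \<lfloor>T\<rfloor>"
    then have "real t \<le> real (nat \<lfloor>T\<rfloor>)" by simp
    also have "\<dots> \<le> T" using assms by (rule of_nat_floor)
    finally show "real t \<le> T" .
  qed
  then show ?thesis unfolding srw_hit_prob_def hit_event_def by simp
qed

lemma srw_traj_nth_0: "xs \<in> set_pmf (srw_traj E n w) \<Longrightarrow> xs ! 0 = w"
  by (induction n arbitrary: xs w) auto

lemma prob_bind_pmf_of_set:
  assumes "finite N" "N \<noteq> {}"
  shows "measure_pmf.prob (bind_pmf (pmf_of_set N) F) A = (\<Sum>w\<in>N. measure_pmf.prob (F w) A) / card N"
proof -
  have "ennreal (measure_pmf.prob (bind_pmf (pmf_of_set N) F) A) = emeasure (bind_pmf (pmf_of_set N) F) A"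
    by (simp add: measure_pmf.emeasure_eq_measure)
  also have "\<dots> = (\<Sum>w\<in>N. emeasure (F w) A) / card N"
    using assms by (simp add: nn_integral_pmf_of_set)
  also have "\<dots> = ennreal ((\<Sum>w\<in>N. measure_pmf.prob (F w) A) / card N)"
    using assms by (simp add: measure_pmf.emeasure_eq_measure sum_nonneg ennreal_of_nat_eq_real_of_nat
        divide_ennreal card_gt_0_iff)
  finally show ?thesis by (simp add: sum_nonneg)
qed

lemma vimage_Cons_hit_event: "(#) v -` hit_event (Suc n) y = {xs. \<exists>s\<le>n. xs ! s = y}"
proof (intro set_eqI iffI)
  fix xs assume "xs \<in> (#) v -` hit_event (Suc n) y"
  then obtain t where "1 \<le> t" "t \<le> Suc n" "(v # xs) ! t = y" by (auto simp: hit_event_def)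
  then show "xs \<in> {xs. \<exists>s\<le>n. xs ! s = y}" by (cases t) auto
next
  fix xs assume "xs \<in> {xs. \<exists>s\<le>n. xs ! s = y}"
  then obtain s where "s \<le> n" "xs ! s = y" by auto
  then show "xs \<in> (#) v -` hit_event (Suc n) y"
    unfolding hit_event_def by (auto intro!: exI[of _ "Suc s"])
qed

lemma prob_visit_le_hit_event:
  assumes "w \<noteq> y"
  shows "measure_pmf.prob (srw_traj E n w) {xs. \<exists>s\<le>n. xs ! s = y}
    \<le> measure_pmf.prob (srw_traj E n w) (hit_event n y)"
proof -
  have "{xs. \<exists>s\<le>n. xs ! s = y} \<inter> set_pmf (srw_traj E n w) \<subseteq> hit_event n y"
  proof
    fix xs assume "xs \<in> {xs. \<exists>s\<le>n. xs ! s = y} \<inter> set_pmf (srw_traj E n w)"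
    then obtain s where "s \<le> n" "xs ! s = y" and "xs ! 0 = w"
      using srw_traj_nth_0[of xs E n w] by auto
    then show "xs \<in> hit_event n y"
      using assms unfolding hit_event_def by (cases s) auto
  qed
  then have "measure_pmf.prob (srw_traj E n w) ({xs. \<exists>s\<le>n. xs ! s = y} \<inter> set_pmf (srw_traj E n w))
    \<le> measure_pmf.prob (srw_traj E n w) (hit_event n y)"
    by (intro measure_pmf.finite_measure_mono) auto
  then show ?thesis by (simp add: measure_Int_set_pmf)
qed

text \<open>Optional stopping for the supermartingale \<open>g(X\<^sub>t)\<^sup>2 - t\<close>, by induction on the time
  horizon; a walk started at \<open>y\<close> is charged the trivial bound \<open>K \<le> g(y)\<^sup>2\<close>.\<close>
lemma hit_prob_le_by_drift:
  fixes g :: "'a \<Rightarrow> real"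
  assumes "finite V" "\<And>u v. E u v \<Longrightarrow> u \<in> V \<and> v \<in> V"
    and "0 \<le> K" "K \<le> (g y)\<^sup>2"
    and drift: "\<And>v. v \<in> V \<Longrightarrow> v \<noteq> y \<Longrightarrow>
       (\<Sum>w\<in>{w\<in>V. E v w}. (g w)\<^sup>2) \<le> card {w\<in>V. E v w} * ((g v)\<^sup>2 + 1)"
    and "v \<in> V" "v \<noteq> y"
  shows "K * measure_pmf.prob (srw_traj E n v) (hit_event n y) \<le> (g v)\<^sup>2 + n"
  using assms(6,7)
proof (induction n arbitrary: v)
  case 0
  then show ?case by (simp add: hit_event_def)
next
  case (Suc n)
  define B where "B = {xs. \<exists>s\<le>n. xs ! s = y}"
  have B_bound: "K * measure_pmf.prob (srw_traj E n w) B \<le> (g w)\<^sup>2 + n" if "w \<in> V" for w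
  proof (cases "w = y")
    case True
    have "K * measure_pmf.prob (srw_traj E n w) B \<le> K"
      using assms(3) by (simp add: mult_left_le)
    then show ?thesis using assms(4) True by simp
  next
    case False
    have "K * measure_pmf.prob (srw_traj E n w) B \<le> K * measure_pmf.prob (srw_traj E n w) (hit_event n y)"
      using assms(3) prob_visit_le_hit_event[OF False] unfolding B_def by (intro mult_left_mono)
    also have "\<dots> \<le> (g w)\<^sup>2 + n" using Suc.IH[OF that False] .
    finally show ?thesis .
  qed
  define N where "N = {w\<in>V. E v w}"
  have N_eq: "{w. E v w} = N" using assms(2) by (auto simp: N_def)
  have "finite N" using assms(1) by (simp add: N_def)
  show ?case
  proof (cases "N = {}")
    case True
    then have "srw_traj E (Suc n) v = map_pmf ((#) v) (srw_traj E n v)"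
      by (simp add: srw_step_def N_eq bind_return_pmf)
    then show ?thesis
      using B_bound[OF Suc.prems(1)] by (simp add: vimage_Cons_hit_event B_def)
  next
    case False
    then have "measure_pmf.prob (srw_traj E (Suc n) v) (hit_event (Suc n) y)
        = (\<Sum>w\<in>N. measure_pmf.prob (srw_traj E n w) B) / card N"
      using \<open>finite N\<close> by (simp add: srw_step_def N_eq prob_bind_pmf_of_set vimage_Cons_hit_event B_def)
    then have "K * measure_pmf.prob (srw_traj E (Suc n) v) (hit_event (Suc n) y)
        = (\<Sum>w\<in>N. K * measure_pmf.prob (srw_traj E n w) B) / card N"
      by (simp add: sum_distrib_left)
    also have "\<dots> \<le> (\<Sum>w\<in>N. (g w)\<^sup>2 + n) / card N"
      using B_bound by (intro divide_right_mono sum_mono) (auto simp: N_def)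
    also have "\<dots> = (\<Sum>w\<in>N. (g w)\<^sup>2) / card N + n"
      using \<open>finite N\<close> False by (simp add: sum.distrib add_divide_distrib card_gt_0_iff)
    also have "\<dots> \<le> ((g v)\<^sup>2 + 1) + n"
      using drift[OF Suc.prems] \<open>finite N\<close> False
      by (simp add: N_def[symmetric] divide_le_eq card_gt_0_iff mult.commute)
    finally show ?thesis by simp
  qed
qed

context energy_minimizer
begin

lemma eff_resistance_sq_mult_hit_prob_le:
  "(eff_resistance V E x y)\<^sup>2 * measure_pmf.prob (srw_traj E n x) (hit_event n y) \<le> n"
proof (cases "eff_conductance V E x y = 0")
  case True
  then show ?thesis by (simp add: eff_resistance_def)
next
  case False
  define C where "C = laplacian V E f x"
  have R_eq: "eff_resistance V E x y = 1 / C"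
    using x_ne_y by (simp add: C_def eff_resistance_def eff_conductance_eq_laplacian_x)
  have "0 < C"
    using False laplacian_x_nonneg by (simp add: C_def eff_conductance_eq_laplacian_x less_le)
  have "(eff_resistance V E x y)\<^sup>2 * measure_pmf.prob (srw_traj E n x) (hit_event n y)
      \<le> ((1 - f x) / C)\<^sup>2 + n"
    using normalized_potential_drift \<open>0 < C\<close> f_x f_y R_eq
    by (intro hit_prob_le_by_drift[OF finite_V edge_in_V _ _ _ x_in_V x_ne_y]) (auto simp: C_def)
  then show ?thesis using f_x by simp
qed

end

theorem lemma2p1:
  fixes V :: "'a set" and E :: "'a \<Rightarrow> 'a \<Rightarrow> bool" and x y :: 'a and \<epsilon> :: real
  assumes "finite_connected_graph V E" and "x \<in> V" and "y \<in> V" and "\<epsilon> > 0"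
  shows "srw_hit_prob E x y (\<epsilon> * (eff_resistance V E x y)\<^sup>2) \<le> \<epsilon>"
proof -
  define R where "R = eff_resistance V E x y"
  define n where "n = nat \<lfloor>\<epsilon> * R\<^sup>2\<rfloor>"
  have hit_prob: "srw_hit_prob E x y (\<epsilon> * R\<^sup>2) = measure_pmf.prob (srw_traj E n x) (hit_event n y)"
    using assms(4) by (simp add: srw_hit_prob_eq_hit_event n_def)
  show ?thesis
  proof (cases "R = 0")
    case True
    then show ?thesis
      unfolding R_def[symmetric] hit_prob using assms(4) by (simp add: n_def hit_event_def)
  next
    case False
    then have "x \<noteq> y" by (auto simp: R_def eff_resistance_def)
    then obtain f where "energy_minimizer V E x y f"
      using assms energy_minimizer_exists[of x y V E]
      unfolding finite_connected_graph_def energy_minimizer_def by metis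
    then have "R\<^sup>2 * measure_pmf.prob (srw_traj E n x) (hit_event n y) \<le> n"
      unfolding R_def by (rule energy_minimizer.eff_resistance_sq_mult_hit_prob_le)
    also have "\<dots> \<le> R\<^sup>2 * \<epsilon>" using assms(4) by (simp add: n_def mult.commute)
    finally show ?thesis using False by (simp add: R_def[symmetric] hit_prob)
  qed
qed

end
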